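(* Let $\alpha\in(0,1)$ and run GD with learning rate $\eta$ from $\mathbf{W}_0=\mathbf{0}$, where $\eta p_1\lesssim1$. Then for every $j\in[K]$ and every sufficiently large training time $t\gg\frac{\log\log K}{\eta p_j}$, $$\mathcal{L}_j^{\mathrm{GD}}(t)-\mathcal{L}_j^*\gtrsim e^{-\eta p_j t}(\log K)^2,$$ where $\mathcal{L}_j^*=-\big(1-\alpha+\tfrac{\alpha}{K}\big)\log\big(1-\alpha+\tfrac{\alpha}{K}\big)-\tfrac{\alpha(K-1)}{K}\log\tfrac{\alpha}{K}$ is the minimal sub-task loss.
   Context: Setup: $K=MC$ items in $M$ groups of $C$ items (group $i$: indices $(i-1)C+1,\dots,iC$); $\widetilde p_1>\dots>\widetilde p_M>0$, $\sum_i\widetilde p_i=1$, $p_j=\widetilde p_i/C$ for $j$ in group $i$. $\mathbf{E},\widetilde{\mathbf{E}}\in\mathbb{R}^{K\times K}$ have orthonormal columns. Noise: $p_{i\mid j}=1-\alpha+\alpha/K$ if $i=j$, $\alpha/K$ otherwise. $\widehat p_{i\mid j}(\mathbf{W})=\exp(\widetilde{\mathbf{E}}_i^\top\mathbf{W}\mathbf{E}_j)/\sum_k\exp(\widetilde{\mathbf{E}}_k^\top\mathbf{W}\mathbf{E}_j)$; $\mathcal{L}_j(\mathbf{W})=-\sum_ip_{i\mid j}\log\widehat p_{i\mid j}(\mathbf{W})$, $\mathcal{L}=\sum_jp_j\mathcal{L}_j$. GD: $\mathbf{W}_{t+1}=\mathbf{W}_t-\eta\nabla\mathcal{L}(\mathbf{W}_t)$,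 $\mathcal{L}^{\mathrm{GD}}_j(t)=\mathcal{L}_j(\mathbf{W}_t)$. Regime $K\gg1$, $M\ll C$; $\lesssim,\gtrsim$ hide constant factors and $\gg$ means "much larger than". *)

theory Defs
  imports "HOL-Analysis.Analysis"
begin

text \<open>Matrices in R^{K x K} are represented as functions nat => nat => real,
  with indices 0..K-1 (0-based; item j of the paper is index j-1 here).
  Column i of a matrix E is the vector (\<lambda>r. E r i).\<close>

type_synonym mat = "nat \<Rightarrow> nat \<Rightarrow> real"

definition orthonormal_cols :: "nat \<Rightarrow> mat \<Rightarrow> bool" where
  "orthonormal_cols K E \<longleftrightarrow>
     (\<forall>i<K. \<forall>k<K. (\<Sum>r<K. E r i * E r k) = (if i = k then 1 else 0))"

definition item_prob :: "nat \<Rightarrow> (nat \<Rightarrow> real) \<Rightarrow> nat \<Rightarrow> real" where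
  "item_prob C pt j = pt (j div C) / real C"

definition noise_prob :: "nat \<Rightarrow> real \<Rightarrow> nat \<Rightarrow> nat \<Rightarrow> real" where
  "noise_prob K \<alpha> i j = (if i = j then 1 - \<alpha> + \<alpha> / real K else \<alpha> / real K)"

definition logit :: "nat \<Rightarrow> mat \<Rightarrow> mat \<Rightarrow> mat \<Rightarrow> nat \<Rightarrow> nat \<Rightarrow> real" where
  "logit K E Et W i j = (\<Sum>r<K. \<Sum>s<K. Et r i * W r s * E s j)"

definition pred_prob :: "nat \<Rightarrow> mat \<Rightarrow> mat \<Rightarrow> mat \<Rightarrow> nat \<Rightarrow> nat \<Rightarrow> real" where
  "pred_prob K E Et W i j =
     exp (logit K E Et W i j) / (\<Sum>k<K. exp (logit K E Et W k j))"

definition loss_j :: "nat \<Rightarrow> real \<Rightarrow> mat \<Rightarrow> mat \<Rightarrow> mat \<Rightarrow> nat \<Rightarrow> real" where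
  "loss_j K \<alpha> E Et W j = - (\<Sum>i<K. noise_prob K \<alpha> i j * ln (pred_prob K E Et W i j))"

definition loss :: "nat \<Rightarrow> nat \<Rightarrow> (nat \<Rightarrow> real) \<Rightarrow> real \<Rightarrow> mat \<Rightarrow> mat \<Rightarrow> mat \<Rightarrow> real" where
  "loss K C pt \<alpha> E Et W = (\<Sum>j<K. item_prob C pt j * loss_j K \<alpha> E Et W j)"

definition mat_grad :: "(mat \<Rightarrow> real) \<Rightarrow> mat \<Rightarrow> mat" where
  "mat_grad f W = (\<lambda>a b. deriv (\<lambda>s. f (\<lambda>r c. W r c + (if r = a \<and> c = b then s else 0))) 0)"

primrec gd :: "nat \<Rightarrow> nat \<Rightarrow> (nat \<Rightarrow> real) \<Rightarrow> real \<Rightarrow> mat \<Rightarrow> mat \<Rightarrow> real \<Rightarrow> nat \<Rightarrow> mat" where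
  "gd K C pt \<alpha> E Et \<eta> 0 = (\<lambda>r c. 0)"
| "gd K C pt \<alpha> E Et \<eta> (Suc t) =
     (let W = gd K C pt \<alpha> E Et \<eta> t; G = mat_grad (loss K C pt \<alpha> E Et) W in
      (\<lambda>r c. if r < K \<and> c < K then W r c - \<eta> * G r c else 0))"

definition loss_star :: "nat \<Rightarrow> real \<Rightarrow> real" where
  "loss_star K \<alpha> = - (1 - \<alpha> + \<alpha> / real K) * ln (1 - \<alpha> + \<alpha> / real K)
                    - \<alpha> * (real K - 1) / real K * ln (\<alpha> / real K)"

end

theory Submission
  imports Defs
begin

(* Since E and Et are orthonormal, a gradient step on W is a gradient step on the logit matrix
   Et^T W E, and the loss of item j only moves column j of it, by eta p_j (softmax - noise).
   Starting from 0 this column therefore always has the form B + D_t [i = j], and the margin D_t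
   obeys the scalar recursion D_(t+1) = D_t + x (P - sigma D_t) with P = 1 - alpha + alpha/K,
   sigma D = e^D / (e^D + K - 1) and x = eta p_j K / (K - 1).
   The excess loss is exactly the binary KL divergence of P from sigma D_t, hence at least
   2 (P - sigma D_t)^2 by Pinsker.  As sigma is 1/4-Lipschitz, the gap P - sigma D_t shrinks by
   at most the factor 1 - x/4 per step, so it stays above (1 - alpha)/2 e^(-2/5 eta p_j t);
   squared, this beats e^(-eta p_j t) (log K)^2 as soon as eta p_j t >= 10 log log K. *)

section \<open>The scalar margin recursion\<close>

definition binary_kl :: "real \<Rightarrow> real \<Rightarrow> real" where
  "binary_kl P q = P * ln (P / q) + (1 - P) * ln ((1 - P) / (1 - q))"

lemma binary_kl_ge_sq:
  assumes "0 < q" "q < 1" "0 < P" "P < 1"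
  shows "2 * (P - q)\<^sup>2 \<le> binary_kl P q"
proof -
  have le_case: "2 * (P - q)\<^sup>2 \<le> binary_kl P q" if "0 < q" "q \<le> P" "P < 1" for P q :: real
  proof -
    define g where "g s = P * (ln P - ln s) + (1 - P) * (ln (1 - P) - ln (1 - s)) - 2 * (P - s)\<^sup>2"
      for s
    have "g P \<le> g q"
    proof (rule deriv_nonpos_imp_antimono[where g = g])
      fix s assume "s \<in> {q..P}"
      then have s: "0 < s" "s < 1" "s \<le> P" using that by auto
      show "(g has_real_derivative (P - s) * (4 - 1 / (s * (1 - s)))) (at s)"
        unfolding g_def[abs_def]
        apply (rule DERIV_cong)
         apply (intro derivative_eq_intros)
        using s apply simp_all
        apply (simp add: field_simps)
        done
      have "4 * (s * (1 - s)) \<le> 1"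
        using sum_squares_ge_zero[of "2 * s - 1" 0] by (simp add: algebra_simps power2_eq_square)
      then show "(P - s) * (4 - 1 / (s * (1 - s))) \<le> 0"
        using s by (intro mult_nonneg_nonpos) (auto simp: field_simps)
    qed (fact that)
    then show ?thesis using that by (simp add: g_def binary_kl_def ln_div)
  qed
  show ?thesis
  proof (cases "q \<le> P")
    case False
    have "binary_kl P q = binary_kl (1 - P) (1 - q)" by (simp add: binary_kl_def)
    with le_case[of "1 - q" "1 - P"] False assms show ?thesis by (simp add: power2_commute)
  qed (use le_case assms in auto)
qed

definition diag_prob :: "nat \<Rightarrow> real \<Rightarrow> real" where
  "diag_prob K d = exp d / (exp d + real K - 1)"

lemma diag_prob_denom_pos: "K \<ge> 1 \<Longrightarrow> exp d + real K - 1 > 0"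
  using exp_gt_zero[of d] by linarith

lemma diag_prob_pos: "K \<ge> 1 \<Longrightarrow> diag_prob K d > 0"
  using diag_prob_denom_pos by (simp add: diag_prob_def)

lemma diag_prob_has_real_derivative:
  assumes "K \<ge> 1"
  shows "(diag_prob K has_real_derivative diag_prob K d * (1 - diag_prob K d)) (at d)"
proof -
  have "exp d + real K - 1 \<noteq> 0" using diag_prob_denom_pos[OF assms] by (metis less_irrefl)
  then show ?thesis unfolding diag_prob_def[abs_def]
    by (intro derivative_eq_intros refl) (auto simp: field_simps power2_eq_square)
qed

lemma diag_prob_add_le:
  assumes "K \<ge> 1" "0 \<le> \<delta>"
  shows "diag_prob K (d + \<delta>) \<le> diag_prob K d + \<delta> / 4"
proof -
  define g where "g s = s / 4 - diag_prob K s" for s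
  have "g d \<le> g (d + \<delta>)"
  proof (rule deriv_nonneg_imp_mono[where g = g])
    fix s
    show "(g has_real_derivative 1 / 4 - diag_prob K s * (1 - diag_prob K s)) (at s)"
      unfolding g_def[abs_def]
      using DERIV_diff[OF DERIV_cdivide[OF DERIV_ident, of 4] diag_prob_has_real_derivative[OF assms(1)]]
      by simp
    show "0 \<le> 1 / 4 - diag_prob K s * (1 - diag_prob K s)"
      using sum_squares_ge_zero[of "diag_prob K s - 1/2" 0] by (simp add: algebra_simps power2_eq_square)
  qed (use assms in simp)
  then show ?thesis by (simp add: g_def add_divide_distrib)
qed

primrec diag_logit :: "nat \<Rightarrow> real \<Rightarrow> real \<Rightarrow> nat \<Rightarrow> real" where
  "diag_logit K P x 0 = 0"
| "diag_logit K P x (Suc t) = diag_logit K P x t + x * (P - diag_prob K (diag_logit K P x t))"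

lemma diag_logit_gap_ge:
  assumes "K \<ge> 1" "1 / real K \<le> P" "0 \<le> x" "x \<le> 4"
  shows "(P - 1 / real K) * (1 - x / 4) ^ t \<le> P - diag_prob K (diag_logit K P x t)"
proof (induction t)
  case 0
  then show ?case by (simp add: diag_prob_def)
next
  case (Suc t)
  define D where "D = diag_logit K P x t"
  have "0 \<le> (P - 1 / real K) * (1 - x / 4) ^ t" using assms by simp
  then have gap_nonneg: "0 \<le> P - diag_prob K D" using Suc.IH by (simp add: D_def)
  have "diag_prob K (diag_logit K P x (Suc t)) \<le> diag_prob K D + x * (P - diag_prob K D) / 4"
    using diag_prob_add_le[OF assms(1) mult_nonneg_nonneg[OF assms(3) gap_nonneg]] by (simp add: D_def)
  then have step: "(P - diag_prob K D) * (1 - x / 4) \<le> P - diag_prob K (diag_logit K P x (Suc t))"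
    by (simp add: algebra_simps)
  have "(P - 1 / real K) * (1 - x / 4) ^ Suc t = (P - 1 / real K) * (1 - x / 4) ^ t * (1 - x / 4)"
    by simp
  also have "\<dots> \<le> (P - diag_prob K D) * (1 - x / 4)"
    using Suc.IH assms by (intro mult_right_mono) (simp_all add: D_def)
  finally show ?case using step by linarith
qed

lemma exp_neg_le_one_minus:
  fixes y :: real
  assumes "0 \<le> y" "y \<le> 1 / 6"
  shows "exp (- (6 / 5) * y) \<le> 1 - y"
proof -
  have "1 \<le> (1 - y) * (1 + 6 / 5 * y)"
    using assms by (simp add: algebra_simps mult_right_le_one_le)
  also have "\<dots> \<le> (1 - y) * exp (6 / 5 * y)"
    using assms exp_ge_add_one_self[of "6 / 5 * y"] by (intro mult_left_mono) simp_all
  finally show ?thesis by (simp add: exp_minus field_simps)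
qed

definition noise_diag :: "nat \<Rightarrow> real \<Rightarrow> real" where
  "noise_diag K \<alpha> = 1 - \<alpha> + \<alpha> / real K"

lemma one_minus_noise_diag: "K \<ge> 1 \<Longrightarrow> 1 - noise_diag K \<alpha> = \<alpha> * (real K - 1) / real K"
  by (simp add: noise_diag_def field_simps)

lemma noise_diag_bounds:
  assumes "K \<ge> 2" "0 < \<alpha>" "\<alpha> < 1"
  shows "0 < noise_diag K \<alpha>" "noise_diag K \<alpha> < 1"
proof -
  show "0 < noise_diag K \<alpha>" using assms by (simp add: noise_diag_def add_pos_pos)
  have "0 < \<alpha> * (real K - 1) / real K" using assms by simp
  then show "noise_diag K \<alpha> < 1" using one_minus_noise_diag[of K \<alpha>] assms by linarith
qed

lemma noise_diag_minus_inverse: "K \<ge> 1 \<Longrightarrow> noise_diag K \<alpha> - 1 / real K = (1 - \<alpha>) * (1 - 1 / real K)"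
  by (simp add: noise_diag_def field_simps)

lemma diag_logit_gd_gap_ge:
  assumes K: "K \<ge> 4" and \<alpha>: "0 < \<alpha>" "\<alpha> < 1" and h: "0 < h" "h \<le> 1 / 2"
  shows "(1 - \<alpha>) / 2 * exp (- (2 / 5) * (h * real t))
    \<le> noise_diag K \<alpha> - diag_prob K (diag_logit K (noise_diag K \<alpha>) (h * real K / (real K - 1)) t)"
proof -
  define x where "x = h * real K / (real K - 1)"
  have "real K / (real K - 1) \<le> 4 / 3" using K by (simp add: field_simps)
  then have "h * (real K / (real K - 1)) \<le> h * (4 / 3)" using h by (intro mult_left_mono) simp_all
  then have "x \<le> h * (4 / 3)" by (simp add: x_def)
  moreover have "0 \<le> x" using h K by (simp add: x_def)
  ultimately have x: "0 \<le> x" "x / 4 \<le> h / 3" by linarith+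
  have "(1 - \<alpha>) * (1 / 2) \<le> (1 - \<alpha>) * (1 - 1 / real K)"
    using K \<alpha> by (intro mult_left_mono) (simp_all add: field_simps)
  then have gap0: "(1 - \<alpha>) / 2 \<le> noise_diag K \<alpha> - 1 / real K"
    using K by (simp add: noise_diag_minus_inverse)
  moreover have "exp (- (2 / 5) * (h * real t)) \<le> (1 - x / 4) ^ t"
  proof -
    have "exp (- (2 / 5) * (h * real t)) \<le> exp (- (6 / 5) * (x / 4)) ^ t"
    proof -
      have "(6 / 5) * (x / 4) * real t \<le> (2 / 5) * h * real t"
        using x by (intro mult_right_mono) simp_all
      then show ?thesis by (simp add: exp_of_nat_mult[symmetric] mult.commute mult.left_commute)
    qed
    also have "\<dots> \<le> (1 - x / 4) ^ t"
      using x h by (intro power_mono exp_neg_le_one_minus) simp_all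
    finally show ?thesis .
  qed
  ultimately have "(1 - \<alpha>) / 2 * exp (- (2 / 5) * (h * real t))
      \<le> (noise_diag K \<alpha> - 1 / real K) * (1 - x / 4) ^ t"
    using \<alpha> by (intro mult_mono) simp_all
  also have "\<dots> \<le> noise_diag K \<alpha> - diag_prob K (diag_logit K (noise_diag K \<alpha>) x t)"
    using gap0 K \<alpha> x h
    by (intro diag_logit_gap_ge) simp_all
  finally show ?thesis unfolding x_def .
qed

lemma excess_loss_eq_binary_kl:
  assumes K: "K \<ge> 2" and \<alpha>: "0 < \<alpha>" "\<alpha> < 1"
  shows "ln (exp D + real K - 1) - noise_diag K \<alpha> * D - loss_star K \<alpha>
    = binary_kl (noise_diag K \<alpha>) (diag_prob K D)"
proof -
  define P where "P = noise_diag K \<alpha>"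
  define q where "q = diag_prob K D"
  define S where "S = exp D + real K - 1"
  have S: "S > 0" using diag_prob_denom_pos K unfolding S_def by simp
  have K1: "real K - 1 > 0" using K by simp
  have one_minus_P: "1 - P = \<alpha> * (real K - 1) / real K"
    using K by (simp add: P_def one_minus_noise_diag)
  have P: "0 < P" "0 < 1 - P"
    using noise_diag_bounds[OF assms] by (simp_all add: P_def)
  have "q = exp D / S" "1 - q = (real K - 1) / S"
    using S by (simp_all add: q_def diag_prob_def S_def field_simps)
  then have q: "0 < q" "0 < 1 - q" and ln_q: "ln q = D - ln S"
    and ln_one_minus_q: "ln (1 - q) = ln (real K - 1) - ln S"
    using S K1 by (simp_all add: ln_div)
  have "\<alpha> / real K = (1 - P) / (real K - 1)"
    using K1 by (simp add: one_minus_P)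
  then have "ln (\<alpha> / real K) = ln (1 - P) - ln (real K - 1)"
    using P K1 by (simp add: ln_div)
  then have "loss_star K \<alpha> = - P * ln P - (1 - P) * (ln (1 - P) - ln (real K - 1))"
    unfolding loss_star_def noise_diag_def[symmetric] P_def[symmetric] one_minus_P[symmetric] by simp
  moreover have "binary_kl P q = P * (ln P - ln q) + (1 - P) * (ln (1 - P) - ln (1 - q))"
    using P q by (simp add: binary_kl_def ln_div)
  ultimately show ?thesis
    unfolding P_def[symmetric] q_def[symmetric] S_def[symmetric] ln_q ln_one_minus_q
    by (simp add: algebra_simps)
qed

lemma diag_logit_gd_excess_loss_ge:
  assumes K: "K \<ge> 4" and \<alpha>: "0 < \<alpha>" "\<alpha> < 1" and h: "0 < h" "h \<le> 1 / 2"
    and t: "10 * ln (ln (real K)) \<le> h * real t"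
    and D: "D = diag_logit K (noise_diag K \<alpha>) (h * real K / (real K - 1)) t"
  shows "(1 - \<alpha>)\<^sup>2 / 2 * exp (- h * real t) * (ln (real K))\<^sup>2
    \<le> ln (exp D + real K - 1) - noise_diag K \<alpha> * D - loss_star K \<alpha>"
proof -
  define w where "w = (1 - \<alpha>) / 2 * exp (- (2 / 5) * (h * real t))"
  define P where "P = noise_diag K \<alpha>"
  have gap: "w \<le> P - diag_prob K D" and w: "0 \<le> w"
    using diag_logit_gd_gap_ge[OF K \<alpha> h] \<alpha> by (simp_all add: w_def P_def D)
  have "(ln (real K))\<^sup>2 = exp (2 * ln (ln (real K)))"
    using K by (simp add: exp_double)
  also have "\<dots> \<le> exp (h * real t / 5)" using t by simp
  finally have "exp (- h * real t) * (ln (real K))\<^sup>2 \<le> exp (- (4 / 5) * (h * real t))"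
    by (auto simp: exp_add[symmetric] intro: order_trans[OF mult_left_mono])
  then have "(1 - \<alpha>)\<^sup>2 / 2 * (exp (- h * real t) * (ln (real K))\<^sup>2)
      \<le> (1 - \<alpha>)\<^sup>2 / 2 * exp (- (4 / 5) * (h * real t))"
    by (rule mult_left_mono) simp
  also have "\<dots> = 2 * w\<^sup>2"
    by (simp add: w_def power_mult_distrib exp_double[symmetric] power_divide)
  also have "\<dots> \<le> 2 * (P - diag_prob K D)\<^sup>2"
    using gap w by (simp add: power_mono)
  also have "\<dots> \<le> binary_kl P (diag_prob K D)"
  proof (rule binary_kl_ge_sq)
    show "0 < P" "P < 1"
      using noise_diag_bounds[of K \<alpha>] K \<alpha> by (simp_all add: P_def)
    then show "0 < diag_prob K D" "diag_prob K D < 1"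
      using K gap w diag_prob_pos[of K D] by simp_all
  qed
  also have "\<dots> = ln (exp D + real K - 1) - P * D - loss_star K \<alpha>"
    using K \<alpha> by (simp add: P_def excess_loss_eq_binary_kl)
  finally show ?thesis by (simp add: P_def mult.assoc)
qed

section \<open>Logits and the gradient of the loss\<close>

lemma logit_sum:
  assumes "finite A"
  shows "logit K E Et (\<lambda>r s. \<Sum>x\<in>A. W x r s) i j = (\<Sum>x\<in>A. logit K E Et (W x) i j)"
  unfolding logit_def by (simp add: sum_distrib_left sum_distrib_right sum.swap[where A = A])

lemma logit_scale: "logit K E Et (\<lambda>r s. c * W r s) i j = c * logit K E Et W i j"
  unfolding logit_def by (simp add: sum_distrib_left mult_ac)

lemma logit_outer_product:
  assumes "orthonormal_cols K E" "orthonormal_cols K Et" "a < K" "b < K" "i < K" "j < K"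
  shows "logit K E Et (\<lambda>r s. Et r a * E s b) i j = (if i = a \<and> j = b then 1 else 0)"
proof -
  have "logit K E Et (\<lambda>r s. Et r a * E s b) i j = (\<Sum>r<K. Et r i * Et r a) * (\<Sum>s<K. E s b * E s j)"
    unfolding logit_def sum_product by (simp add: mult_ac)
  then show ?thesis using assms unfolding orthonormal_cols_def by auto
qed

lemma logit_add_entry:
  assumes "a < K" "b < K"
  shows "logit K E Et (\<lambda>r c. W r c + (if r = a \<and> c = b then s else 0)) i j
    = logit K E Et W i j + s * (Et a i * E b j)"
proof -
  have "Et r i * (if r = a \<and> c = b then s else 0) * E c j
      = (if c = b then if r = a then s * (Et a i * E b j) else 0 else 0)" for r c
    by auto
  then have "logit K E Et (\<lambda>r c. if r = a \<and> c = b then s else 0) i j = s * (Et a i * E b j)"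
    using assms by (simp add: logit_def sum.delta)
  then show ?thesis by (simp add: logit_def distrib_left distrib_right sum.distrib)
qed

lemma sum_lessThan_if_eq:
  fixes a b :: real
  assumes "j < K"
  shows "(\<Sum>k<K. if k = j then a else b) = a + (real K - 1) * b"
proof -
  have "(\<Sum>k<K. if k = j then a else b) = (\<Sum>k<K. b + (if k = j then a - b else 0))"
    by (rule sum.cong) auto
  also have "\<dots> = a + (real K - 1) * b" using assms by (simp add: sum.distrib algebra_simps)
  finally show ?thesis .
qed

lemma noise_prob_sum:
  assumes "j < K"
  shows "(\<Sum>i<K. noise_prob K \<alpha> i j) = 1"
proof -
  have "(\<Sum>i<K. noise_prob K \<alpha> i j) = noise_diag K \<alpha> + (real K - 1) * (\<alpha> / real K)"
    unfolding noise_prob_def noise_diag_def by (rule sum_lessThan_if_eq[OF assms])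
  also have "\<dots> = 1" using assms by (simp add: noise_diag_def field_simps)
  finally show ?thesis .
qed

lemma loss_j_eq_log_sum_exp:
  assumes "j < K"
  shows "loss_j K \<alpha> E Et W j
    = ln (\<Sum>k<K. exp (logit K E Et W k j)) - (\<Sum>i<K. noise_prob K \<alpha> i j * logit K E Et W i j)"
proof -
  let ?S = "\<Sum>k<K. exp (logit K E Et W k j)"
  have "?S > 0" using assms by (intro sum_pos) auto
  then have "ln (pred_prob K E Et W i j) = logit K E Et W i j - ln ?S" for i
    by (simp add: pred_prob_def ln_div)
  then have "loss_j K \<alpha> E Et W j = - (\<Sum>i<K. noise_prob K \<alpha> i j * (logit K E Et W i j - ln ?S))"
    by (simp only: loss_j_def)
  also have "\<dots> = ln ?S * (\<Sum>i<K. noise_prob K \<alpha> i j) - (\<Sum>i<K. noise_prob K \<alpha> i j * logit K E Et W i j)"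
    by (simp add: algebra_simps sum_subtractf sum_distrib_right)
  finally show ?thesis using noise_prob_sum[OF assms] by simp
qed

lemma logit_outer_sum:
  assumes "orthonormal_cols K E" "orthonormal_cols K Et" "i < K" "j < K"
  shows "logit K E Et (\<lambda>r s. \<Sum>j'<K. \<Sum>i'<K. F i' j' * (Et r i' * E s j')) i j = F i j"
proof -
  have "logit K E Et (\<lambda>r s. \<Sum>j'<K. \<Sum>i'<K. F i' j' * (Et r i' * E s j')) i j
      = (\<Sum>j'<K. \<Sum>i'<K. F i' j' * logit K E Et (\<lambda>r s. Et r i' * E s j') i j)"
    by (simp add: logit_sum logit_scale)
  also have "\<dots> = (\<Sum>j'<K. \<Sum>i'<K. if i' = i then if j' = j then F i' j' else 0 else 0)"
    using assms by (intro sum.cong refl) (auto simp: logit_outer_product)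
  also have "\<dots> = F i j" using assms by simp
  finally show ?thesis .
qed

lemma log_sum_exp_has_real_derivative:
  fixes z c :: "'a \<Rightarrow> real"
  assumes "finite A" "A \<noteq> {}"
  shows "((\<lambda>s. ln (\<Sum>k\<in>A. exp (z k + s * c k))) has_real_derivative
           (\<Sum>k\<in>A. exp (z k) / (\<Sum>l\<in>A. exp (z l)) * c k)) (at 0)"
proof -
  have "(\<Sum>l\<in>A. exp (z l)) > 0" using assms by (intro sum_pos) auto
  then show ?thesis
    by (auto intro!: derivative_eq_intros simp: sum_divide_distrib[symmetric] mult.commute)
qed

lemma mat_grad_loss:
  assumes "a < K" "b < K"
  shows "mat_grad (loss K C pt \<alpha> E Et) W a b
    = (\<Sum>j<K. item_prob C pt j *
         (\<Sum>i<K. (pred_prob K E Et W i j - noise_prob K \<alpha> i j) * (Et a i * E b j)))"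
proof -
  define z where "z = logit K E Et W"
  define v where "v i j = Et a i * E b j" for i j
  have "(\<lambda>s. loss K C pt \<alpha> E Et (\<lambda>r c. W r c + (if r = a \<and> c = b then s else 0)))
      = (\<lambda>s. \<Sum>j<K. item_prob C pt j * (ln (\<Sum>k<K. exp (z k j + s * v k j))
                 - (\<Sum>i<K. noise_prob K \<alpha> i j * (z i j + s * v i j))))"
    unfolding loss_def z_def v_def
    by (intro ext sum.cong refl) (simp add: loss_j_eq_log_sum_exp logit_add_entry assms)
  moreover have "(\<dots> has_real_derivative
      (\<Sum>j<K. item_prob C pt j * ((\<Sum>k<K. exp (z k j) / (\<Sum>l<K. exp (z l j)) * v k j)
                                  - (\<Sum>i<K. noise_prob K \<alpha> i j * v i j)))) (at 0)"
    using assms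
    by (intro DERIV_sum DERIV_cmult DERIV_diff log_sum_exp_has_real_derivative)
       (auto intro!: derivative_eq_intros)
  ultimately show ?thesis
    unfolding mat_grad_def v_def[symmetric]
    by (simp add: DERIV_imp_deriv pred_prob_def z_def left_diff_distrib sum_subtractf)
qed

lemma logit_gd_Suc:
  assumes "orthonormal_cols K E" "orthonormal_cols K Et" "i < K" "j < K"
  shows "logit K E Et (gd K C pt \<alpha> E Et \<eta> (Suc t)) i j
    = logit K E Et (gd K C pt \<alpha> E Et \<eta> t) i j
      - \<eta> * (item_prob C pt j * (pred_prob K E Et (gd K C pt \<alpha> E Et \<eta> t) i j - noise_prob K \<alpha> i j))"
proof -
  define W where "W = gd K C pt \<alpha> E Et \<eta> t"
  define F where "F i' j' = item_prob C pt j' * (pred_prob K E Et W i' j' - noise_prob K \<alpha> i' j')" for i' j'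
  define G where "G r s = (\<Sum>j'<K. \<Sum>i'<K. F i' j' * (Et r i' * E s j'))" for r s
  have "mat_grad (loss K C pt \<alpha> E Et) W r s = G r s" if "r < K" "s < K" for r s
    using that by (simp add: mat_grad_loss G_def F_def sum_distrib_left mult.assoc)
  then have "logit K E Et (gd K C pt \<alpha> E Et \<eta> (Suc t)) i j = logit K E Et (\<lambda>r s. W r s - \<eta> * G r s) i j"
    unfolding logit_def by (intro sum.cong refl) (simp add: W_def[symmetric] Let_def)
  also have "\<dots> = logit K E Et W i j - \<eta> * logit K E Et G i j"
    by (simp add: logit_def algebra_simps sum_subtractf sum_distrib_left)
  also have "logit K E Et G i j = F i j"
    unfolding G_def using assms by (rule logit_outer_sum)
  finally show ?thesis by (simp add: W_def F_def)
qed

section \<open>Gradient descent keeps each logit column symmetric\<close>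

lemma sum_exp_logit_column:
  assumes "j < K" "\<forall>k<K. logit K E Et W k j = B + (if k = j then D else 0)"
  shows "(\<Sum>k<K. exp (logit K E Et W k j)) = exp B * (exp D + real K - 1)"
proof -
  have "(\<Sum>k<K. exp (logit K E Et W k j)) = (\<Sum>k<K. if k = j then exp B * exp D else exp B)"
    using assms(2) by (intro sum.cong refl) (simp add: exp_add)
  also have "\<dots> = exp B * (exp D + real K - 1)"
    using assms(1) by (simp add: sum_lessThan_if_eq algebra_simps)
  finally show ?thesis .
qed

lemma pred_prob_column:
  assumes "i < K" "j < K" "\<forall>k<K. logit K E Et W k j = B + (if k = j then D else 0)"
  shows "pred_prob K E Et W i j = (if i = j then exp D else 1) / (exp D + real K - 1)"
  using assms unfolding pred_prob_def sum_exp_logit_column[OF assms(2,3)] by (simp add: exp_add)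

lemma loss_j_column:
  assumes "j < K" "\<forall>k<K. logit K E Et W k j = B + (if k = j then D else 0)"
  shows "loss_j K \<alpha> E Et W j = ln (exp D + real K - 1) - noise_diag K \<alpha> * D"
proof -
  have "(\<Sum>i<K. noise_prob K \<alpha> i j * logit K E Et W i j)
      = (\<Sum>i<K. noise_prob K \<alpha> i j * B + (if i = j then noise_diag K \<alpha> * D else 0))"
    using assms(2) by (intro sum.cong refl) (simp add: noise_prob_def noise_diag_def algebra_simps)
  also have "\<dots> = B + noise_diag K \<alpha> * D"
    using assms(1) by (simp add: sum.distrib sum_distrib_right[symmetric] noise_prob_sum)
  moreover have "ln (\<Sum>k<K. exp (logit K E Et W k j)) = B + ln (exp D + real K - 1)"
    using assms diag_prob_denom_pos[of K D] unfolding sum_exp_logit_column[OF assms] by (simp add: ln_mult)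
  ultimately show ?thesis by (simp add: loss_j_eq_log_sum_exp[OF assms(1)])
qed

lemma gd_logit_column:
  fixes \<eta> :: real and C :: nat and pt :: "nat \<Rightarrow> real"
  assumes oE: "orthonormal_cols K E" and oEt: "orthonormal_cols K Et" and K: "K \<ge> 2" and j: "j < K"
  defines "h \<equiv> \<eta> * item_prob C pt j"
  shows "\<exists>B. \<forall>i<K. logit K E Et (gd K C pt \<alpha> E Et \<eta> t) i j
    = B + (if i = j then diag_logit K (noise_diag K \<alpha>) (h * real K / (real K - 1)) t else 0)"
proof (induction t)
  case 0
  show ?case by (intro exI[of _ 0]) (simp add: logit_def)
next
  case (Suc t)
  define D where "D = diag_logit K (noise_diag K \<alpha>) (h * real K / (real K - 1)) t"
  define S where "S = exp D + real K - 1"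
  from Suc.IH obtain B where col: "\<forall>i<K. logit K E Et (gd K C pt \<alpha> E Et \<eta> t) i j = B + (if i = j then D else 0)"
    unfolding D_def by blast
  have S: "S > 0" and K1: "real K - 1 > 0" using K diag_prob_denom_pos[of K D] by (simp_all add: S_def)
  have step: "logit K E Et (gd K C pt \<alpha> E Et \<eta> (Suc t)) i j
      = B + (if i = j then D else 0) - h * ((if i = j then exp D else 1) / S - noise_prob K \<alpha> i j)"
    if "i < K" for i
    using logit_gd_Suc[OF oE oEt that j] pred_prob_column[OF that j col] col that
    by (simp add: h_def S_def)
  have D_Suc: "diag_logit K (noise_diag K \<alpha>) (h * real K / (real K - 1)) (Suc t)
      = D + h * real K / (real K - 1) * (noise_diag K \<alpha> - exp D / S)"
    by (simp add: D_def S_def diag_prob_def)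
  define u where "u = 1 / S"
  have e: "exp D / S = 1 - (real K - 1) * u" using S by (simp add: u_def S_def field_simps)
  have P: "noise_diag K \<alpha> = 1 - \<alpha> * (real K - 1) / real K"
    using one_minus_noise_diag[of K \<alpha>] K by simp
  \<comment> \<open>All entries of the column share the shift \<open>- h (1/S - \<alpha>/K)\<close>, which goes into \<open>B\<close>;
     the rest of the diagonal update is the margin recursion.\<close>
  have diag: "D - h * (exp D / S - noise_diag K \<alpha>)
      = - h * (1 / S - \<alpha> / real K) + D + h * real K / (real K - 1) * (noise_diag K \<alpha> - exp D / S)"
    unfolding e P u_def[symmetric] using K1 by (simp add: field_simps)
  show ?case
  proof (intro exI allI impI)
    fix i assume i: "i < K"
    show "logit K E Et (gd K C pt \<alpha> E Et \<eta> (Suc t)) i j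
      = B - h * (1 / S - \<alpha> / real K)
        + (if i = j then diag_logit K (noise_diag K \<alpha>) (h * real K / (real K - 1)) (Suc t) else 0)"
      unfolding step[OF i] D_Suc using diag by (auto simp: noise_prob_def noise_diag_def)
  qed
qed

lemma gd_loss_j_excess_ge:
  fixes \<eta> :: real and C :: nat and pt :: "nat \<Rightarrow> real"
  assumes oE: "orthonormal_cols K E" and oEt: "orthonormal_cols K Et" and K: "K \<ge> 4" and j: "j < K"
    and \<alpha>: "0 < \<alpha>" "\<alpha> < 1"
    and h: "0 < \<eta> * item_prob C pt j" "\<eta> * item_prob C pt j \<le> 1 / 2"
    and t: "10 * ln (ln (real K)) \<le> \<eta> * item_prob C pt j * real t"
  shows "(1 - \<alpha>)\<^sup>2 / 2 * exp (- \<eta> * item_prob C pt j * real t) * (ln (real K))\<^sup>2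
    \<le> loss_j K \<alpha> E Et (gd K C pt \<alpha> E Et \<eta> t) j - loss_star K \<alpha>"
proof -
  define D where "D = diag_logit K (noise_diag K \<alpha>) (\<eta> * item_prob C pt j * real K / (real K - 1)) t"
  obtain B where "\<forall>i<K. logit K E Et (gd K C pt \<alpha> E Et \<eta> t) i j = B + (if i = j then D else 0)"
    using gd_logit_column[OF oE oEt _ j, where \<eta> = \<eta> and C = C and pt = pt and \<alpha> = \<alpha> and t = t] K
    unfolding D_def by auto
  then have "loss_j K \<alpha> E Et (gd K C pt \<alpha> E Et \<eta> t) j = ln (exp D + real K - 1) - noise_diag K \<alpha> * D"
    by (rule loss_j_column[OF j])
  with diag_logit_gd_excess_loss_ge[OF K \<alpha> h t D_def] show ?thesis by simp
qed

lemma item_prob_pos_le_first: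
  assumes "C \<ge> 1" "j < M * C" "\<forall>i<M. pt i > 0" "\<forall>i j. i < j \<and> j < M \<longrightarrow> pt j < pt i"
  shows "0 < item_prob C pt j" "item_prob C pt j \<le> item_prob C pt 0"
proof -
  have "j div C < M" using assms(1,2) by (simp add: less_mult_imp_div_less)
  then show "0 < item_prob C pt j" using assms(1,3) by (simp add: item_prob_def)
  have "pt (j div C) \<le> pt 0"
    using \<open>j div C < M\<close> assms(4) by (cases "j div C = 0") (auto intro: less_imp_le)
  then show "item_prob C pt j \<le> item_prob C pt 0" by (simp add: item_prob_def divide_right_mono)
qed

theorem theorem5p5:
  fixes \<alpha> :: real
  assumes "0 < \<alpha>" and "\<alpha> < 1"
  shows "\<exists>c\<^sub>\<eta>>0. \<exists>\<delta>>0. \<exists>A>0. \<exists>c>0. \<exists>K0::nat.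
    \<forall>(M::nat) (C::nat) (pt::nat \<Rightarrow> real) (E::mat) (Et::mat) (\<eta>::real) (j::nat) (t::nat).
      let K = M * C in
      (M \<ge> 1 \<and> C \<ge> 1 \<and> K \<ge> K0 \<and> real M \<le> \<delta> * real C
       \<and> (\<forall>i<M. pt i > 0) \<and> (\<forall>i j. i < j \<and> j < M \<longrightarrow> pt j < pt i)
       \<and> (\<Sum>i<M. pt i) = 1
       \<and> orthonormal_cols K E \<and> orthonormal_cols K Et
       \<and> \<eta> > 0 \<and> \<eta> * item_prob C pt 0 \<le> c\<^sub>\<eta>
       \<and> j < K
       \<and> real t \<ge> A * ln (ln (real K)) / (\<eta> * item_prob C pt j))
      \<longrightarrow> loss_j K \<alpha> E Et (gd K C pt \<alpha> E Et \<eta> t) j - loss_star K \<alpha>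
            \<ge> c * exp (- \<eta> * item_prob C pt j * real t) * (ln (real K))^2"
proof -
  have core: "(1 - \<alpha>)\<^sup>2 / 2 * exp (- \<eta> * item_prob C pt j * real t) * (ln (real (M * C)))\<^sup>2
      \<le> loss_j (M * C) \<alpha> E Et (gd (M * C) C pt \<alpha> E Et \<eta> t) j - loss_star (M * C) \<alpha>"
    if "C \<ge> 1" "M * C \<ge> 4" "\<forall>i<M. pt i > 0" "\<forall>i j. i < j \<and> j < M \<longrightarrow> pt j < pt i"
      "orthonormal_cols (M * C) E" "orthonormal_cols (M * C) Et" "\<eta> > 0" "\<eta> * item_prob C pt 0 \<le> 1 / 2"
      "j < M * C" "real t \<ge> 10 * ln (ln (real (M * C))) / (\<eta> * item_prob C pt j)"
    for M C pt E Et \<eta> j t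
  proof (rule gd_loss_j_excess_ge)
    note p = item_prob_pos_le_first[OF that(1,9,3,4)]
    show "0 < \<eta> * item_prob C pt j" using p \<open>\<eta> > 0\<close> by simp
    show "\<eta> * item_prob C pt j \<le> 1 / 2"
      using p that(7,8) by (meson mult_left_mono less_imp_le order_trans)
    show "10 * ln (ln (real (M * C))) \<le> \<eta> * item_prob C pt j * real t"
      using that(10) \<open>0 < \<eta> * item_prob C pt j\<close> by (simp add: pos_divide_le_eq mult.commute)
  qed (use that assms in auto)
  show ?thesis
    unfolding Let_def
    apply (rule exI[of _ "1 / 2"], rule conjI, simp)
    apply (rule exI[of _ 1], rule conjI, simp)
    apply (rule exI[of _ 10], rule conjI, simp)
    apply (rule exI[of _ "(1 - \<alpha>)\<^sup>2 / 2"], rule conjI, use assms in simp)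
    apply (rule exI[of _ 4])
    by (intro allI impI core) auto
qed

end
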